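(* Let $P(x)=a_2x^2+a_1x+a_0$, $R(x)=b_2x^2+b_1x$ and $Q(x)=q_2x^2+q_1x+q_0$ be complex polynomials with $a_2,b_2,q_2\ne0$. For $n\ge0$ and $\alpha\in\mathbb C$ let $\tilde F(n,\alpha)=\prod_{z\in Q^{-1}(P^{-1}(R^{-n}(\alpha)))}z$, the product of the $2^{n+2}$ roots, counted with multiplicity, of $R^{\circ n}(P(Q(z)))=\alpha$. Then $\tilde F(n,\alpha)=\tilde c_{n,1}\alpha+\tilde c_{n,0}$ with $\tilde c_{n,1}=-\frac{b_2}{(q_2^2a_2b_2)^{2^n}}$ and $\tilde c_{n,0}=\frac{1}{(q_2^2a_2b_2)^{2^n}}\big(\tilde H(n)-\frac{b_1}{2}\big)$, where $\tilde H(0)=a_2b_2\big(q_0^2+q_0\frac{a_1}{a_2}+\frac{a_0}{a_2}\big)+\frac{b_1}{2}$ and $\tilde H(n)=\tilde H(n-1)^2+\frac{b_1(2-b_1)}{4}$ for $n\ge1$.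
   Context: $R^{\circ n}$ denotes the $n$-fold composition ($R^{\circ0}=\mathrm{id}$); $R^{-n}(\alpha)$ is the multiset of roots of $R^{\circ n}(w)=\alpha$, and for a polynomial $g$ and multiset $S$, $g^{-1}(S)$ is the multiset union of the roots of $g(z)=w$ over $w\in S$. *)

theory Defs
  imports "HOL-Computational_Algebra.Computational_Algebra"
begin

definition poly_iter :: "complex poly \<Rightarrow> nat \<Rightarrow> complex poly" where
  "poly_iter R n = ((\<lambda>p. pcompose R p) ^^ n) [:0, 1:]"

definition iter_preimage :: "complex poly \<Rightarrow> nat \<Rightarrow> complex \<Rightarrow> complex multiset" where
  "iter_preimage R n \<alpha> = proots (poly_iter R n - [:\<alpha>:])"

definition preimage_mset :: "complex poly \<Rightarrow> complex multiset \<Rightarrow> complex multiset" where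
  "preimage_mset g S = (\<Sum>w\<in>#S. proots (g - [:w:]))"

definition Ftilde :: "complex poly \<Rightarrow> complex poly \<Rightarrow> complex poly \<Rightarrow> nat \<Rightarrow> complex \<Rightarrow> complex" where
  "Ftilde P Q R n \<alpha> = (\<Prod>z\<in>#preimage_mset Q (preimage_mset P (iter_preimage R n \<alpha>)). z)"

fun Htilde :: "complex \<Rightarrow> complex \<Rightarrow> complex \<Rightarrow> complex \<Rightarrow> complex \<Rightarrow> complex \<Rightarrow> nat \<Rightarrow> complex" where
  "Htilde a0 a1 a2 b1 b2 q0 0 = a2 * b2 * (q0^2 + q0 * (a1 / a2) + a0 / a2) + b1 / 2"
| "Htilde a0 a1 a2 b1 b2 q0 (Suc n) = (Htilde a0 a1 a2 b1 b2 q0 n)^2 + b1 * (2 - b1) / 4"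

end

theory Submission
  imports Defs
begin

text \<open>The multiset \<open>Q\<^sup>-\<^sup>1(P\<^sup>-\<^sup>1(R\<^sup>-\<^sup>n(\<alpha>)))\<close> is the root multiset of
  \<open>T = (R\<^sup>n - \<alpha>) \<circ> P \<circ> Q\<close>, which has even degree \<open>2^(n+2)\<close>, so by Vieta its product
  of roots is \<open>T(0) / lc(T) = (R\<^sup>n(P(q0)) - \<alpha>) / lc(T)\<close>. The leading coefficient of
  \<open>R\<^sup>n\<close> is \<open>b2^(2^n - 1)\<close>, and the affine change \<open>w \<mapsto> b2 w + b1/2\<close> conjugates \<open>R\<close> to
  \<open>w\<^sup>2 + b1(2 - b1)/4\<close>, which turns the orbit of \<open>P(q0)\<close> under \<open>R\<close> into the recursion
  defining \<open>Htilde\<close>.\<close>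

lemma degree_diff_const:
  fixes p :: "'a::comm_ring poly"
  assumes "degree p > 0"
  shows "degree (p - [:c:]) = degree p"
  using assms degree_add_eq_left[of "[:- c:]" p] by (simp add: diff_conv_add_uminus)

lemma lead_coeff_diff_const:
  fixes p :: "'a::comm_ring poly"
  assumes "degree p > 0"
  shows "lead_coeff (p - [:c:]) = lead_coeff p"
  using assms by (simp add: degree_diff_const coeff_pCons split: nat.split)

lemma pcompose_prod_mset: "pcompose (\<Prod>x\<in>#A. f x) p = (\<Prod>x\<in>#A. pcompose (f x) p)"
  by (induction A) (simp_all add: pcompose_1 pcompose_mult)

lemma preimage_mset_proots:
  fixes g h :: "complex poly"
  assumes "degree g > 0" "h \<noteq> 0"
  shows "preimage_mset g (proots h) = proots (pcompose h g)"
proof -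
  have g_shift_nonzero: "g - [:x:] \<noteq> 0" for x
    using assms(1) degree_diff_const[OF assms(1), of x] by auto
  have "pcompose h g = pcompose (smult (lead_coeff h) (\<Prod>x\<in>#proots h. [:-x, 1:])) g"
    by (simp add: complex_poly_decompose_multiset)
  also have "\<dots> = smult (lead_coeff h) (\<Prod>x\<in>#proots h. g - [:x:])"
    by (simp add: pcompose_smult pcompose_prod_mset pcompose_pCons diff_conv_add_uminus add.commute)
  finally have "proots (pcompose h g) = proots (\<Prod>x\<in>#proots h. g - [:x:])"
    using assms(2) by simp
  also have "\<dots> = (\<Sum>x\<in>#proots h. proots (g - [:x:]))"
    using proots_prod_mset[of "image_mset (\<lambda>x. g - [:x:]) (proots h)"] g_shift_nonzero
    by (simp add: image_iff image_mset.compositionality comp_def)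
  finally show ?thesis by (simp add: preimage_mset_def)
qed

lemma prod_mset_uminus: "(\<Prod>x\<in>#A. - x) = (-1) ^ size A * prod_mset (A :: 'a::comm_ring_1 multiset)"
  by (induction A) simp_all

lemma prod_mset_proots:
  fixes p :: "complex poly"
  assumes "p \<noteq> 0"
  shows "prod_mset (proots p) = (-1) ^ degree p * coeff p 0 / lead_coeff p"
proof -
  have "coeff p 0 = poly p 0"
    by (simp add: poly_0_coeff_0)
  also have "\<dots> = poly (smult (lead_coeff p) (\<Prod>x\<in>#proots p. [:-x, 1:])) 0"
    by (simp add: complex_poly_decompose_multiset)
  also have "\<dots> = lead_coeff p * (\<Prod>x\<in>#proots p. - x)"
    by (simp add: poly_prod_mset)
  also have "\<dots> = lead_coeff p * (-1) ^ degree p * prod_mset (proots p)"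
    by (simp add: prod_mset_uminus size_proots_complex)
  finally show ?thesis
    using assms by (simp add: field_simps)
qed

lemma prod_mset_proots_pcompose:
  fixes p q :: "complex poly"
  assumes "p \<noteq> 0" "degree q > 0"
  shows "prod_mset (proots (pcompose p q)) =
    (-1) ^ (degree p * degree q) * poly p (coeff q 0) / (lead_coeff p * lead_coeff q ^ degree p)"
proof -
  have lead: "lead_coeff (pcompose p q) = lead_coeff p * lead_coeff q ^ degree p"
    using assms(2) by (rule lead_coeff_comp)
  then have "pcompose p q \<noteq> 0"
    using assms by auto
  then show ?thesis
    using prod_mset_proots lead by (simp add: degree_pcompose)
qed

lemma poly_iter_Suc: "poly_iter R (Suc n) = pcompose R (poly_iter R n)"
  by (simp add: poly_iter_def)

lemma degree_poly_iter: "degree (poly_iter R n) = degree R ^ n"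
  by (induction n) (simp_all add: poly_iter_Suc degree_pcompose poly_iter_def)

lemma lead_coeff_poly_iter:
  fixes R :: "complex poly"
  assumes "degree R = 2"
  shows "lead_coeff R * lead_coeff (poly_iter R n) = lead_coeff R ^ 2 ^ n"
proof (induction n)
  case 0
  then show ?case by (simp add: poly_iter_def)
next
  case (Suc n)
  have "lead_coeff (poly_iter R (Suc n)) = lead_coeff R * lead_coeff (poly_iter R n) ^ 2"
    using assms lead_coeff_comp[of "poly_iter R n" R] by (simp add: poly_iter_Suc degree_poly_iter)
  then have "lead_coeff R * lead_coeff (poly_iter R (Suc n)) = (lead_coeff R * lead_coeff (poly_iter R n)) ^ 2"
    by (simp add: power2_eq_square)
  also have "\<dots> = lead_coeff R ^ 2 ^ Suc n"
    by (simp add: Suc power_mult[symmetric] mult.commute)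
  finally show ?case .
qed

lemma Ftilde_eq_prod_mset_proots:
  fixes P Q R :: "complex poly"
  assumes "degree P > 0" "degree Q > 0" "degree R > 0"
  shows "Ftilde P Q R n \<alpha> = prod_mset (proots (pcompose (poly_iter R n - [:\<alpha>:]) (pcompose P Q)))"
proof -
  have deg_shift: "degree (poly_iter R n - [:\<alpha>:]) > 0"
    using assms(3) by (simp add: degree_diff_const degree_poly_iter)
  then have "poly_iter R n - [:\<alpha>:] \<noteq> 0"
    by auto
  moreover have "pcompose (poly_iter R n - [:\<alpha>:]) P \<noteq> 0"
    using deg_shift assms(1) by (metis degree_0 degree_pcompose nat_0_less_mult_iff less_irrefl)
  ultimately show ?thesis
    using assms by (simp add: Ftilde_def iter_preimage_def preimage_mset_proots pcompose_assoc)
qed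

lemma Htilde_eq_poly_iter:
  fixes a0 a1 a2 b1 b2 q0 :: complex
  assumes "a2 \<noteq> 0"
  shows "Htilde a0 a1 a2 b1 b2 q0 n =
    b2 * poly (poly_iter [:0, b1, b2:] n) (poly [:a0, a1, a2:] q0) + b1 / 2"
proof (induction n)
  case 0
  then show ?case
    using assms by (simp add: poly_iter_def field_simps power2_eq_square)
next
  case (Suc n)
  define w where "w = poly (poly_iter [:0, b1, b2:] n) (poly [:a0, a1, a2:] q0)"
  have "b2 * poly (poly_iter [:0, b1, b2:] (Suc n)) (poly [:a0, a1, a2:] q0) + b1 / 2 =
      b2 * poly [:0, b1, b2:] w + b1 / 2"
    by (simp add: poly_iter_Suc poly_pcompose w_def)
  also have "\<dots> = (b2 * w + b1 / 2) ^ 2 + b1 * (2 - b1) / 4"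
    by (simp add: field_simps power2_eq_square)
  also have "\<dots> = Htilde a0 a1 a2 b1 b2 q0 (Suc n)"
    using Suc by (simp add: w_def)
  finally show ?case ..
qed

theorem lemma5p6:
  fixes a0 a1 a2 b1 b2 q0 q1 q2 :: complex and n :: nat and \<alpha> :: complex
  assumes "a2 \<noteq> 0" and "b2 \<noteq> 0" and "q2 \<noteq> 0"
  shows "Ftilde [:a0, a1, a2:] [:q0, q1, q2:] [:0, b1, b2:] n \<alpha> =
           (- b2 / (q2^2 * a2 * b2) ^ (2^n)) * \<alpha>
           + (1 / (q2^2 * a2 * b2) ^ (2^n)) * (Htilde a0 a1 a2 b1 b2 q0 n - b1 / 2)"
proof -
  let ?P = "[:a0, a1, a2:]" and ?Q = "[:q0, q1, q2:]" and ?R = "[:0, b1, b2:]"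
  let ?I = "poly_iter ?R n"
  have deg_I: "degree ?I = 2 ^ n"
    using assms by (simp add: degree_poly_iter numeral_2_eq_2)
  have lead_I: "b2 * lead_coeff ?I = b2 ^ 2 ^ n"
    using assms lead_coeff_poly_iter[of ?R n] by simp
  have deg_PQ: "degree (pcompose ?P ?Q) = 4"
    using assms by (simp add: degree_pcompose)
  have lead_PQ: "lead_coeff (pcompose ?P ?Q) = a2 * q2 ^ 2"
    using assms lead_coeff_comp[of ?Q ?P] by (simp add: power2_eq_square)
  have deg_I_shift: "degree (?I - [:\<alpha>:]) = 2 ^ n"
    using deg_I by (simp add: degree_diff_const)
  then have "?I - [:\<alpha>:] \<noteq> 0"
    by force
  have "Ftilde ?P ?Q ?R n \<alpha> = prod_mset (proots (pcompose (?I - [:\<alpha>:]) (pcompose ?P ?Q)))"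
    using assms by (simp add: Ftilde_eq_prod_mset_proots)
  also have "\<dots> = (poly ?I (poly ?P q0) - \<alpha>) / (lead_coeff ?I * (a2 * q2 ^ 2) ^ 2 ^ n)"
    using prod_mset_proots_pcompose[of "?I - [:\<alpha>:]" "pcompose ?P ?Q"]
      \<open>?I - [:\<alpha>:] \<noteq> 0\<close> deg_I_shift deg_PQ lead_PQ deg_I lead_coeff_diff_const[of ?I \<alpha>]
    by (simp add: power_mult[symmetric] mult.commute[of _ 4])
  also have "\<dots> = b2 * (poly ?I (poly ?P q0) - \<alpha>) / (b2 * lead_coeff ?I * (a2 * q2 ^ 2) ^ 2 ^ n)"
    using assms(2) by simp
  also have "\<dots> = b2 * (poly ?I (poly ?P q0) - \<alpha>) / (q2 ^ 2 * a2 * b2) ^ 2 ^ n"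
    by (simp add: lead_I power_mult_distrib ac_simps)
  finally show ?thesis
    using assms Htilde_eq_poly_iter[of a2 a0 a1 b1 b2 q0 n] by (simp add: field_simps)
qed

end
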